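(* Let $a,b\in\mathbb{C}$ and let $u(\tau)$ be a solution of $$u''=\frac{(u')^2}{u}-\frac{u'}{\tau}+\frac1\tau\bigl(-8u^2+2ab\bigr)+\frac{b^2}{u}.$$ If $\operatorname{Re}u(\tau)>0$ for all $\tau>0$, then $u$ has no poles for $\tau>0$. *)

theory Defs
  imports "HOL-Complex_Analysis.Complex_Analysis"
begin

end

theory Submission
  imports Defs
begin

text \<open>
  Suppose \<open>u\<close> has a pole of order \<open>m\<close> at \<open>c = t\<^sub>0 > 0\<close>, and write \<open>u = g / (w - c)\<^sup>m\<close> with \<open>g\<close>
  holomorphic and \<open>g c \<noteq> 0\<close>. Clearing denominators in the equation turns it into an identity
  \<open>F w (w - c)\<^sup>m = G w (w - c)\<^sup>2\<close> between holomorphic functions with \<open>F c = c m (g c)\<^sup>2\<close> and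
  \<open>G c = -8 (g c)\<^sup>3\<close>, both nonzero. Comparing orders of vanishing forces \<open>m = 2\<close> and then
  \<open>g c = -c/4\<close>. Hence \<open>u(s) \<approx> -t\<^sub>0 / (4 (s - t\<^sub>0)\<^sup>2)\<close> for real \<open>s\<close> near \<open>t\<^sub>0\<close>, which has negative real
  part, contradicting \<open>Re u > 0\<close> on the positive axis.
\<close>

lemma eq_at_of_isCont_eventually_eq:
  fixes F G :: "'a::{perfect_space,t2_space} \<Rightarrow> 'b::t2_space"
  assumes "isCont F c" "isCont G c" "eventually (\<lambda>w. F w = G w) (at c)"
  shows "F c = G c"
proof -
  have "(G \<longlongrightarrow> F c) (at c)"
    using assms(1,3) by (simp add: isCont_def tendsto_cong)
  then show ?thesis
    using assms(2) by (simp add: isCont_def tendsto_unique[OF at_neq_bot])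
qed

lemma power_factor_unique:
  fixes F G :: "'a::real_normed_field \<Rightarrow> 'a"
  assumes "isCont F c" "isCont G c" "F c \<noteq> 0" "G c \<noteq> 0"
    and "eventually (\<lambda>w. F w * (w - c) ^ m = G w * (w - c) ^ n) (at c)"
  shows "m = n \<and> F c = G c"
proof -
  have one_side: "m' = n' \<and> F' c = G' c"
    if "m' \<le> n'" "isCont F' c" "isCont G' c" "F' c \<noteq> 0"
      and eq: "eventually (\<lambda>w. F' w * (w - c) ^ m' = G' w * (w - c) ^ n') (at c)"
    for F' G' :: "'a \<Rightarrow> 'a" and m' n'
  proof -
    have ev: "eventually (\<lambda>w. F' w = G' w * (w - c) ^ (n' - m')) (at c)"
      using eq eventually_neq_at_within[of c c]
    proof eventually_elim
      case (elim w)
      then have "F' w * (w - c) ^ m' = (G' w * (w - c) ^ (n' - m')) * (w - c) ^ m'"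
        using \<open>m' \<le> n'\<close> by (simp add: mult.assoc flip: power_add)
      then show ?case using elim(2) by simp
    qed
    have cont: "isCont (\<lambda>w. G' w * (w - c) ^ (n' - m')) c"
      using \<open>isCont G' c\<close> by (intro continuous_intros)
    have "F' c = G' c * (c - c) ^ (n' - m')"
      by (rule eq_at_of_isCont_eventually_eq[OF \<open>isCont F' c\<close> cont ev])
    with \<open>F' c \<noteq> 0\<close> \<open>m' \<le> n'\<close> show ?thesis by (cases "n' - m'") auto
  qed
  show ?thesis
  proof (cases "m \<le> n")
    case True
    show ?thesis by (rule one_side[OF True assms(1,2,3,5)])
  next
    case False
    have "eventually (\<lambda>w. G w * (w - c) ^ n = F w * (w - c) ^ m) (at c)"
      using assms(5) by (rule eventually_mono) simp
    then have "n = m \<and> G c = F c"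
      using False by (intro one_side[OF _ assms(2,1,4)]) simp_all
    then show ?thesis by simp
  qed
qed

lemma has_field_derivative_div_power_transform:
  fixes u g :: "'a::real_normed_field \<Rightarrow> 'a"
  assumes "open D" "w \<in> D" "c \<notin> D"
    and "\<And>v. v \<in> D \<Longrightarrow> u v = g v / (v - c) ^ m"
    and "(g has_field_derivative g') (at w)"
  shows "(u has_field_derivative (g' * (w - c) - of_nat m * g w) / (w - c) ^ Suc m) (at w)"
proof -
  have simplified: "(g' * s ^ m - g w * (of_nat m * s ^ (m - Suc 0))) / (s ^ m * s ^ m)
      = (g' * s - of_nat m * g w) / (s * s ^ m)" if "s \<noteq> 0" for s :: 'a
    using that by (cases m) (simp_all add: field_simps)
  have "w - c \<noteq> 0" using assms(2,3) by auto
  then have "((\<lambda>v. g v / (v - c) ^ m) has_field_derivative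
      (g' * (w - c) - of_nat m * g w) / (w - c) ^ Suc m) (at w)"
    using assms(5) by (auto intro!: derivative_eq_intros simp: simplified)
  then show ?thesis
    using assms(1,2) by (rule has_field_derivative_transform_within_open) (simp add: assms(4))
qed

lemma ode_clear_denominators:
  fixes z s g h k a b :: complex
  assumes "z \<noteq> 0" "s \<noteq> 0" "g \<noteq> 0"
    and "k / s ^ Suc (Suc m) = (h / s ^ Suc m)\<^sup>2 / (g / s ^ m) - h / s ^ Suc m / z
      + (- 8 * (g / s ^ m)\<^sup>2 + 2 * a * b) / z + b\<^sup>2 / (g / s ^ m)"
  shows "(z * (g * k - h\<^sup>2) + g * h * s) * s ^ m
    = (- 8 * g ^ 3 + 2 * a * b * g * (s ^ m)\<^sup>2 + z * b\<^sup>2 * (s ^ m) ^ 3) * s\<^sup>2"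
proof -
  define p where "p = s ^ m"
  have "p \<noteq> 0" using assms(2) by (simp add: p_def)
  have ode: "k / (p * s\<^sup>2) = (h / (p * s))\<^sup>2 / (g / p) - h / (p * s) / z
      + (- 8 * (g / p)\<^sup>2 + 2 * a * b) / z + b\<^sup>2 / (g / p)"
    using assms(4) by (simp add: p_def power2_eq_square mult_ac)
  let ?X = "z * g * p\<^sup>2 * s\<^sup>2"
  have "z * g * k * p = k / (p * s\<^sup>2) * ?X"
    using assms(1-3) \<open>p \<noteq> 0\<close> by (simp add: field_simps power2_eq_square)
  also have "\<dots> = (h / (p * s))\<^sup>2 / (g / p) * ?X - h / (p * s) / z * ?X
      + (- 8 * (g / p)\<^sup>2 + 2 * a * b) / z * ?X + b\<^sup>2 / (g / p) * ?X"
    unfolding ode by (simp add: algebra_simps)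
  also have "\<dots> = z * h\<^sup>2 * p - g * h * p * s + (- 8 * g ^ 3 * s\<^sup>2 + 2 * a * b * g * p\<^sup>2 * s\<^sup>2)
      + z * b\<^sup>2 * p ^ 3 * s\<^sup>2"
    using assms(1-3) \<open>p \<noteq> 0\<close> by (simp add: field_simps power2_eq_square power3_eq_cube)
  finally show ?thesis unfolding p_def[symmetric] by algebra
qed

lemma deriv_div_power:
  fixes u g :: "complex \<Rightarrow> complex"
  assumes g_holo: "g holomorphic_on ball c r"
    and u_eq: "\<And>v. v \<in> ball c r - {c} \<Longrightarrow> u v = g v / (v - c) ^ m"
    and w: "w \<in> ball c r - {c}"
  shows "deriv u w = (deriv g w * (w - c) - of_nat m * g w) / (w - c) ^ Suc m"
    and "deriv (deriv u) w = (deriv (deriv g) w * (w - c)\<^sup>2 - 2 * of_nat m * deriv g w * (w - c)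
      + of_nat m * of_nat (Suc m) * g w) / (w - c) ^ Suc (Suc m)"
proof -
  have D: "open (ball c r - {c})" "c \<notin> ball c r - {c}" by auto
  define g1 where "g1 = deriv g"
  define g2 where "g2 = deriv g1"
  have "g1 holomorphic_on ball c r"
    using g_holo by (simp add: g1_def holomorphic_deriv)
  then have dg: "(g has_field_derivative g1 v) (at v)" and dg1: "(g1 has_field_derivative g2 v) (at v)"
    if "v \<in> ball c r" for v
    using that g_holo by (auto simp: g1_def g2_def intro: holomorphic_derivI)
  define h where "h v = g1 v * (v - c) - of_nat m * g v" for v
  have du: "(u has_field_derivative h v / (v - c) ^ Suc m) (at v)" if "v \<in> ball c r - {c}" for v
    unfolding h_def using that u_eq dg
    by (intro has_field_derivative_div_power_transform[OF D(1) that D(2)]) auto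
  then show "deriv u w = (deriv g w * (w - c) - of_nat m * g w) / (w - c) ^ Suc m"
    using w by (simp add: DERIV_imp_deriv h_def g1_def)
  have "(h has_field_derivative g2 v * (v - c) + (1 - of_nat m) * g1 v) (at v)"
    if "v \<in> ball c r" for v
    unfolding h_def using dg[OF that] dg1[OF that]
    by (auto intro!: derivative_eq_intros simp: algebra_simps)
  then have "(deriv u has_field_derivative
      ((g2 w * (w - c) + (1 - of_nat m) * g1 w) * (w - c) - of_nat (Suc m) * h w) / (w - c) ^ Suc (Suc m))
      (at w)"
    using w du by (intro has_field_derivative_div_power_transform[OF D(1) w D(2)]) (auto simp: DERIV_imp_deriv)
  then show "deriv (deriv u) w = (deriv (deriv g) w * (w - c)\<^sup>2 - 2 * of_nat m * deriv g w * (w - c)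
      + of_nat m * of_nat (Suc m) * g w) / (w - c) ^ Suc (Suc m)"
    by (simp add: DERIV_imp_deriv h_def g1_def g2_def algebra_simps power2_eq_square)
qed

lemma ode_pole_is_double:
  fixes u g :: "complex \<Rightarrow> complex" and a b c :: complex
  assumes "r > 0" "0 \<notin> ball c r" "m \<ge> 1"
    and g_holo: "g holomorphic_on ball c r" and "g c \<noteq> 0"
    and g_nz: "\<And>w. w \<in> ball c r - {c} \<Longrightarrow> g w \<noteq> 0"
    and u_eq: "\<And>w. w \<in> ball c r - {c} \<Longrightarrow> u w = g w / (w - c) ^ m"
    and ode: "\<And>w. w \<in> ball c r - {c} \<Longrightarrow>
       deriv (deriv u) w = (deriv u w)\<^sup>2 / u w - deriv u w / w
         + (- 8 * (u w)\<^sup>2 + 2 * a * b) / w + b\<^sup>2 / u w"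
  shows "m = 2 \<and> g c = - c / 4"
proof -
  define h where "h v = deriv g v * (v - c) - of_nat m * g v" for v
  define k where "k v = deriv (deriv g) v * (v - c)\<^sup>2 - 2 * of_nat m * deriv g v * (v - c)
    + of_nat m * of_nat (Suc m) * g v" for v
  define F where "F v = v * (g v * k v - (h v)\<^sup>2) + g v * h v * (v - c)" for v
  define G where "G v = - 8 * g v ^ 3 + 2 * a * b * g v * ((v - c) ^ m)\<^sup>2 + v * b\<^sup>2 * ((v - c) ^ m) ^ 3" for v
  have "F v * (v - c) ^ m = G v * (v - c)\<^sup>2" if "v \<in> ball c r - {c}" for v
  proof (unfold F_def G_def, rule ode_clear_denominators)
    show "v \<noteq> 0" "v - c \<noteq> 0" "g v \<noteq> 0" using that assms(2) g_nz by auto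
    show "k v / (v - c) ^ Suc (Suc m) = (h v / (v - c) ^ Suc m)\<^sup>2 / (g v / (v - c) ^ m)
      - h v / (v - c) ^ Suc m / v + (- 8 * (g v / (v - c) ^ m)\<^sup>2 + 2 * a * b) / v
      + b\<^sup>2 / (g v / (v - c) ^ m)"
      using ode[OF that] deriv_div_power[OF g_holo u_eq that] unfolding u_eq[OF that] h_def k_def
      by simp
  qed
  then have ev: "eventually (\<lambda>v. F v * (v - c) ^ m = G v * (v - c) ^ 2) (at c)"
    using eventually_at_ball'[OF \<open>r > 0\<close>, of c UNIV] by (auto elim!: eventually_mono)
  have "isCont g c" "isCont (deriv g) c" "isCont (deriv (deriv g)) c"
    using g_holo \<open>r > 0\<close>
    by (auto intro!: continuous_on_interior holomorphic_on_imp_continuous_on holomorphic_deriv)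
  then have cont: "isCont F c" "isCont G c"
    unfolding F_def G_def h_def k_def by (auto intro!: continuous_intros)
  have Fc: "F c = c * of_nat m * (g c)\<^sup>2" and Gc: "G c = - 8 * g c ^ 3"
    using assms(3) by (simp_all add: F_def G_def h_def k_def algebra_simps power2_eq_square zero_power)
  have "c \<noteq> 0" using assms(1,2) by auto
  then have "m = 2 \<and> F c = G c"
    using cont ev assms(3) \<open>g c \<noteq> 0\<close> by (intro power_factor_unique) (simp_all add: Fc Gc)
  then have "m = 2" and "F c = G c" by simp_all
  then have "c * of_nat 2 * (g c)\<^sup>2 = - 8 * g c ^ 3" by (simp only: Fc Gc)
  with \<open>g c \<noteq> 0\<close> have "g c = - c / 4" by (simp add: eval_nat_numeral eq_divide_eq) algebra
  with \<open>m = 2\<close> show ?thesis by simp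
qed

lemma ode_pole_expansion:
  fixes u :: "complex \<Rightarrow> complex" and a b c :: complex
  assumes "r > 0" "0 \<notin> ball c r" and holo: "u holomorphic_on ball c r - {c}" and "is_pole u c"
    and ode: "\<And>w. w \<in> ball c r - {c} \<Longrightarrow> u w \<noteq> 0 \<Longrightarrow>
       deriv (deriv u) w = (deriv u w)\<^sup>2 / u w - deriv u w / w
         + (- 8 * (u w)\<^sup>2 + 2 * a * b) / w + b\<^sup>2 / u w"
  obtains r' g where "r' > 0" "ball c r' \<subseteq> ball c r" "g holomorphic_on ball c r'" "g c = - c / 4"
    and "\<And>w. w \<in> ball c r' - {c} \<Longrightarrow> u w = g w / (w - c)\<^sup>2"
proof -
  obtain r' g where "r' > 0" "cball c r' \<subseteq> ball c r" "g holomorphic_on cball c r'" "g c \<noteq> 0"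
    and u_eq: "\<And>w. w \<in> cball c r' - {c} \<Longrightarrow> u w = g w / (w - c) ^ nat (- zorder u c) \<and> g w \<noteq> 0"
    and "zorder u c < 0"
    using zorder_exist_pole[OF holo open_ball _ \<open>is_pole u c\<close>] \<open>r > 0\<close> by auto
  have "ball c r' \<subseteq> ball c r"
    using \<open>cball c r' \<subseteq> ball c r\<close> ball_subset_cball by blast
  have g_holo: "g holomorphic_on ball c r'"
    using \<open>g holomorphic_on cball c r'\<close> ball_subset_cball by (rule holomorphic_on_subset)
  have "nat (- zorder u c) = 2 \<and> g c = - c / 4"
  proof (rule ode_pole_is_double[OF \<open>r' > 0\<close> _ _ g_holo \<open>g c \<noteq> 0\<close>])
    show "0 \<notin> ball c r'" using \<open>ball c r' \<subseteq> ball c r\<close> assms(2) by blast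
    show "nat (- zorder u c) \<ge> 1" using \<open>zorder u c < 0\<close> by simp
    fix w assume w: "w \<in> ball c r' - {c}"
    then show "g w \<noteq> 0" and "u w = g w / (w - c) ^ nat (- zorder u c)"
      using u_eq[of w] by auto
    then have "u w \<noteq> 0" using w by simp
    then show "deriv (deriv u) w = (deriv u w)\<^sup>2 / u w - deriv u w / w
        + (- 8 * (u w)\<^sup>2 + 2 * a * b) / w + b\<^sup>2 / u w"
      using ode \<open>ball c r' \<subseteq> ball c r\<close> w by blast
  qed
  then show ?thesis
    using that[OF \<open>r' > 0\<close> \<open>ball c r' \<subseteq> ball c r\<close> g_holo] u_eq by auto
qed

lemma eventually_Re_neg_near_double_pole:
  fixes u g :: "complex \<Rightarrow> complex" and t :: real
  assumes "isCont g (of_real t)" "Re (g (of_real t)) < 0" "r > 0"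
    and u_eq: "\<And>w. w \<in> ball (of_real t) r - {of_real t} \<Longrightarrow> u w = g w / (w - of_real t)\<^sup>2"
  shows "eventually (\<lambda>s. complex_of_real s \<in> ball (of_real t) r - {of_real t}
    \<and> Re (u (of_real s)) < 0) (at t)"
proof -
  have "((\<lambda>s. Re (g (of_real s))) \<longlongrightarrow> Re (g (of_real t))) (at t)"
    by (intro tendsto_intros isCont_tendsto_compose[OF assms(1)])
  then have "eventually (\<lambda>s. Re (g (of_real s)) < 0) (at t)"
    using assms(2) by (rule order_tendstoD)
  then show ?thesis
    using eventually_at_ball'[OF \<open>r > 0\<close>, of t UNIV]
  proof eventually_elim
    case (elim s)
    then have s: "complex_of_real s \<in> ball (of_real t) r - {of_real t}"
      by simp
    have "(of_real s - of_real t)\<^sup>2 = complex_of_real ((s - t)\<^sup>2)" by simp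
    then have "Re (u (of_real s)) = Re (g (of_real s)) / (s - t)\<^sup>2"
      by (simp add: u_eq[OF s] Re_divide_of_real)
    with elim s show ?case
      by (simp add: divide_neg_pos)
  qed
qed

lemma exists_ball_punctured_subset_Diff:
  assumes "open S" "c \<in> S" "\<not> c islimpt P"
  obtains r where "r > 0" "ball c r \<subseteq> S" "ball c r - {c} \<subseteq> S - P"
proof -
  have "eventually (\<lambda>w. w \<in> S \<and> w \<notin> P) (at c)"
    using eventually_at_in_open'[OF assms(1,2)] assms(3)
    by (auto simp: islimpt_iff_eventually eventually_conj_iff)
  then obtain r where "r > 0" and r: "\<And>w. w \<noteq> c \<Longrightarrow> dist w c < r \<Longrightarrow> w \<in> S \<and> w \<notin> P"
    unfolding eventually_at by blast
  moreover have "ball c r \<subseteq> S"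
    using r \<open>c \<in> S\<close> by (auto simp: dist_commute) metis
  moreover have "ball c r - {c} \<subseteq> S - P"
    using r by (auto simp: dist_commute)
  ultimately show ?thesis
    using that by blast
qed

theorem lemma3:
  fixes u :: "complex \<Rightarrow> complex" and a b :: complex
    and S P :: "complex set"
  assumes S_open: "open S"
    and S_pos: "{z. Im z = 0 \<and> Re z > 0} \<subseteq> S"
    and S_zero: "0 \<notin> S"
    and P_sub: "P \<subseteq> S"
    and P_discrete: "\<And>z. z \<in> S \<Longrightarrow> \<not> z islimpt P"
    and holo: "u holomorphic_on (S - P)"
    and poles: "\<And>p. p \<in> P \<Longrightarrow> is_pole u p"
    and ode: "\<And>z. z \<in> S - P \<Longrightarrow> u z \<noteq> 0 \<Longrightarrow>
       deriv (deriv u) z = (deriv u z)\<^sup>2 / u z - deriv u z / z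
         + (- 8 * (u z)\<^sup>2 + 2 * a * b) / z + b\<^sup>2 / u z"
    and re_pos: "\<And>t::real. t > 0 \<Longrightarrow> \<not> is_pole u (complex_of_real t)
       \<Longrightarrow> Re (u (complex_of_real t)) > 0"
  shows "\<forall>t::real. t > 0 \<longrightarrow> \<not> is_pole u (complex_of_real t)"
proof (intro allI impI notI)
  fix t :: real
  assume "t > 0" and pole: "is_pole u (complex_of_real t)"
  define c where "c = complex_of_real t"
  have "c \<in> S" using S_pos \<open>t > 0\<close> by (auto simp: c_def)
  then obtain r where "r > 0" "ball c r \<subseteq> S" and punctured: "ball c r - {c} \<subseteq> S - P"
    using exists_ball_punctured_subset_Diff S_open P_discrete by blast
  obtain r' g where "r' > 0" "ball c r' \<subseteq> ball c r" "g holomorphic_on ball c r'" "g c = - c / 4"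
    and u_eq: "\<And>w. w \<in> ball c r' - {c} \<Longrightarrow> u w = g w / (w - c)\<^sup>2"
  proof (rule ode_pole_expansion[OF \<open>r > 0\<close> _ holomorphic_on_subset[OF holo punctured] pole[folded c_def]])
    show "0 \<notin> ball c r" using \<open>ball c r \<subseteq> S\<close> S_zero by blast
  qed (use ode punctured in blast)+
  have "isCont g c"
    using \<open>g holomorphic_on ball c r'\<close> \<open>r' > 0\<close>
    by (auto intro!: continuous_on_interior holomorphic_on_imp_continuous_on)
  moreover have "Re (g c) < 0" using \<open>g c = - c / 4\<close> \<open>t > 0\<close> by (simp add: c_def)
  ultimately have "eventually (\<lambda>s. complex_of_real s \<in> ball c r' - {c} \<and> Re (u (of_real s)) < 0) (at t)"
    using \<open>r' > 0\<close> u_eq unfolding c_def by (rule eventually_Re_neg_near_double_pole)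
  moreover have "eventually (\<lambda>s. s > 0) (at t)"
    using \<open>t > 0\<close> by (rule order_tendstoD(1)[OF tendsto_ident_at])
  ultimately have "eventually (\<lambda>s. s > 0 \<and> complex_of_real s \<in> ball c r' - {c} \<and> Re (u (of_real s)) < 0)
      (at t)"
    by eventually_elim blast
  then obtain s where "s > 0" and s: "complex_of_real s \<in> ball c r' - {c}"
    and "Re (u (of_real s)) < 0"
    using eventually_happens'[OF at_neq_bot] by blast
  have "ball c r' - {c} \<subseteq> S - P"
    using punctured \<open>ball c r' \<subseteq> ball c r\<close> by blast
  then have "u holomorphic_on ball c r' - {c}"
    by (rule holomorphic_on_subset[OF holo])
  then have "\<not> is_pole u (of_real s)"
    using not_is_pole_holomorphic[OF _ s] by blast
  then show False
    using re_pos[OF \<open>s > 0\<close>] \<open>Re (u (of_real s)) < 0\<close> by simp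
qed

end
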